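(* Let $n_d\ge 1$, let $S_1,\dots,S_{n_d}>0$, $\overline{P_0}\ge 0$ and $\theta_0\in[0,\pi/2)$. For $S>0$ define $\mathcal{X}(S,\overline{P_0},\theta_0)=\{(P,Q)\in\mathbb{R}^2: 0\le P\le S\overline{P_0},\ Q^2\le S^2-P^2,\ |Q|\le\tan(\theta_0)P\}$. Then $$\bigoplus_{i=1}^{n_d}\mathcal{X}(S_i,\overline{P_0},\theta_0)=\mathcal{X}\Big(\sum_{i=1}^{n_d}S_i,\overline{P_0},\theta_0\Big).$$
   Context: $\oplus$ denotes the Minkowski sum $A\oplus B=\{a+b: a\in A, b\in B\}$. The set $\mathcal{X}(S,\overline{P},\theta)$ is the feasible real/reactive power set of a photovoltaic inverter with apparent power rating $S$, normalized available real power $\overline{P}$, and minimum power factor $\cos\theta$. *)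

theory Defs
  imports "HOL-Analysis.Analysis"
begin

definition inverter_set :: "real \<Rightarrow> real \<Rightarrow> real \<Rightarrow> (real \<times> real) set" where
  "inverter_set S Pbar \<theta> = {(P, Q). 0 \<le> P \<and> P \<le> S * Pbar \<and> Q\<^sup>2 \<le> S\<^sup>2 - P\<^sup>2 \<and> \<bar>Q\<bar> \<le> tan \<theta> * P}"

definition minkowski_sum :: "'a::plus set \<Rightarrow> 'a set \<Rightarrow> 'a set" where
  "minkowski_sum A B = {a + b | a b. a \<in> A \<and> b \<in> B}"

fun minkowski_sum_upto :: "(nat \<Rightarrow> 'a::plus set) \<Rightarrow> nat \<Rightarrow> 'a set" where
  "minkowski_sum_upto A 0 = {}"
| "minkowski_sum_upto A (Suc 0) = A 1"
| "minkowski_sum_upto A (Suc (Suc n)) = minkowski_sum (minkowski_sum_upto A (Suc n)) (A (Suc (Suc n)))"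

end

theory Submission
  imports Defs
begin

text \<open>
  All constraints defining \<open>inverter_set S Pbar \<theta>\<close> are positively homogeneous of degree one
  in \<open>(P, Q, S)\<close>, so for \<open>S > 0\<close> the set is \<open>S\<close> times the convex set
  \<open>inverter_set 1 Pbar \<theta>\<close>. For a convex set \<open>K\<close> and \<open>a, b \<ge> 0\<close> one has
  \<open>a K \<oplus> b K = (a + b) K\<close>, and induction on the number of summands gives the theorem.
\<close>

lemma minkowski_sum_scaleR_convex:
  fixes K :: "'a::real_vector set"
  assumes "convex K" and "0 \<le> a" and "0 \<le> b"
  shows "minkowski_sum ((*\<^sub>R) a ` K) ((*\<^sub>R) b ` K) = (*\<^sub>R) (a + b) ` K"
proof
  show "minkowski_sum ((*\<^sub>R) a ` K) ((*\<^sub>R) b ` K) \<subseteq> (*\<^sub>R) (a + b) ` K"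
  proof
    fix z assume "z \<in> minkowski_sum ((*\<^sub>R) a ` K) ((*\<^sub>R) b ` K)"
    then obtain x y where xy: "x \<in> K" "y \<in> K" and z: "z = a *\<^sub>R x + b *\<^sub>R y"
      unfolding minkowski_sum_def by auto
    show "z \<in> (*\<^sub>R) (a + b) ` K"
    proof (cases "a + b = 0")
      case True
      then have "a = 0" "b = 0" using assms(2,3) by linarith+
      then have "z = (a + b) *\<^sub>R x" using z by simp
      then show ?thesis using xy by blast
    next
      case False
      then have sum_pos: "0 < a + b" using assms(2,3) by simp
      have "(a / (a + b)) *\<^sub>R x + (b / (a + b)) *\<^sub>R y \<in> K"
        using sum_pos assms by (intro convexD xy) (auto simp: add_divide_distrib[symmetric])
      moreover have "z = (a + b) *\<^sub>R ((a / (a + b)) *\<^sub>R x + (b / (a + b)) *\<^sub>R y)"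
        using z sum_pos by (simp add: scaleR_add_right)
      ultimately show ?thesis by blast
    qed
  qed
  show "(*\<^sub>R) (a + b) ` K \<subseteq> minkowski_sum ((*\<^sub>R) a ` K) ((*\<^sub>R) b ` K)"
    unfolding minkowski_sum_def by (auto simp: scaleR_left_distrib)
qed

lemma minkowski_sum_upto_Suc:
  "1 \<le> n \<Longrightarrow> minkowski_sum_upto A (Suc n) = minkowski_sum (minkowski_sum_upto A n) (A (Suc n))"
  by (cases n) auto

lemma minkowski_sum_upto_scaleR_convex:
  fixes K :: "'a::real_vector set"
  assumes "convex K" and "1 \<le> n"
    and "\<And>i. i \<in> {1..n} \<Longrightarrow> 0 \<le> c i \<and> A i = (*\<^sub>R) (c i) ` K"
  shows "minkowski_sum_upto A n = (*\<^sub>R) (\<Sum>i=1..n. c i) ` K"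
  using assms(2,3)
proof (induction n rule: nat_induct_at_least)
  case base
  then show ?case by simp
next
  case (Suc n)
  have "minkowski_sum_upto A (Suc n) = minkowski_sum ((*\<^sub>R) (\<Sum>i=1..n. c i) ` K) ((*\<^sub>R) (c (Suc n)) ` K)"
    using Suc by (simp add: minkowski_sum_upto_Suc)
  also have "\<dots> = (*\<^sub>R) ((\<Sum>i=1..n. c i) + c (Suc n)) ` K"
    using Suc.prems by (intro minkowski_sum_scaleR_convex assms(1) sum_nonneg) auto
  finally show ?case by simp
qed

lemma convex_inverter_set: "convex (inverter_set S Pbar \<theta>)"
proof -
  have "inverter_set S Pbar \<theta> =
      {z. inner (-1, 0) z \<le> 0} \<inter> {z. inner (1, 0) z \<le> S * Pbar} \<inter> cball 0 \<bar>S\<bar>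
      \<inter> {z. inner (- tan \<theta>, 1) z \<le> 0} \<inter> {z. inner (- tan \<theta>, -1) z \<le> 0}"
    by (auto simp: inverter_set_def norm_Pair real_sqrt_le_iff' abs_le_iff
        real_sqrt_le_mono)
  then show ?thesis
    by (simp add: convex_Int convex_halfspace_le)
qed

lemma scaleR_mem_inverter_set_iff:
  assumes "0 < c"
  shows "c *\<^sub>R z \<in> inverter_set (c * S) Pbar \<theta> \<longleftrightarrow> z \<in> inverter_set S Pbar \<theta>"
proof -
  obtain P Q where z: "z = (P, Q)" by fastforce
  have "(c * Q)\<^sup>2 \<le> (c * S)\<^sup>2 - (c * P)\<^sup>2 \<longleftrightarrow> c\<^sup>2 * Q\<^sup>2 \<le> c\<^sup>2 * (S\<^sup>2 - P\<^sup>2)"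
    by (simp add: power_mult_distrib right_diff_distrib)
  also have "\<dots> \<longleftrightarrow> Q\<^sup>2 \<le> S\<^sup>2 - P\<^sup>2"
    using assms by simp
  finally show ?thesis
    using assms by (simp add: z inverter_set_def zero_le_mult_iff abs_mult mult.left_commute)
qed

lemma inverter_set_scaleR:
  assumes "0 < c"
  shows "inverter_set (c * S) Pbar \<theta> = (*\<^sub>R) c ` inverter_set S Pbar \<theta>"
proof (intro set_eqI iffI)
  fix z assume "z \<in> inverter_set (c * S) Pbar \<theta>"
  then have "inverse c *\<^sub>R z \<in> inverter_set S Pbar \<theta>"
    using assms scaleR_mem_inverter_set_iff[of c "inverse c *\<^sub>R z"] by simp
  moreover have "z = c *\<^sub>R (inverse c *\<^sub>R z)"
    using assms by simp
  ultimately show "z \<in> (*\<^sub>R) c ` inverter_set S Pbar \<theta>" by blast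
next
  fix z assume "z \<in> (*\<^sub>R) c ` inverter_set S Pbar \<theta>"
  then show "z \<in> inverter_set (c * S) Pbar \<theta>"
    using assms scaleR_mem_inverter_set_iff by auto
qed

theorem corollary1:
  fixes n :: nat and S :: "nat \<Rightarrow> real" and Pbar \<theta> :: real
  assumes "n \<ge> 1"
    and "\<And>i. i \<in> {1..n} \<Longrightarrow> S i > 0"
    and "Pbar \<ge> 0"
    and "0 \<le> \<theta>" and "\<theta> < pi / 2"
  shows "minkowski_sum_upto (\<lambda>i. inverter_set (S i) Pbar \<theta>) n
           = inverter_set (\<Sum>i=1..n. S i) Pbar \<theta>"
proof -
  let ?K = "inverter_set 1 Pbar \<theta>"
  have "0 \<le> S i \<and> inverter_set (S i) Pbar \<theta> = (*\<^sub>R) (S i) ` ?K" if "i \<in> {1..n}" for i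
    using assms(2)[OF that] inverter_set_scaleR[of "S i" 1] by simp
  then have "minkowski_sum_upto (\<lambda>i. inverter_set (S i) Pbar \<theta>) n = (*\<^sub>R) (\<Sum>i=1..n. S i) ` ?K"
    using assms(1) by (intro minkowski_sum_upto_scaleR_convex convex_inverter_set)
  moreover have "0 < (\<Sum>i=1..n. S i)"
    using assms(1,2) by (intro sum_pos) auto
  ultimately show ?thesis
    using inverter_set_scaleR[of "\<Sum>i=1..n. S i" 1] by simp
qed

end
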